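(* Suppose processes know neither $n$ nor any upper bound $D$ on the network causal diameter, i.e., the algorithm executed by a process depends only on its own identifier and not on $n$ or $D$. Then there is no deterministic algorithm that solves leader election in every run (for every number of processes $n\ge2$, every assignment of distinct identifiers, and every sequence of communication graphs satisfying Assumption 1 for some positive integer $D$).
   Context: Model: a finite set $\Pi$ of $n\ge2$ processes with distinct identifiers runs a deterministic algorithm in synchronous lock-step rounds $r=1,2,\dots$. An adversary fixes an infinite sequence of simple directed graphs $\mathcal{G}^1,\mathcal{G}^2,\dots$ on vertex set $\Pi$; $(p\to q)\in\mathcal{G}^r$ iff $q$ receives $p$'s round-$r$ message in round $r$. In round $r$ each process broadcasts a message determined by its current state (received exactly by its out-neighbours in $\mathcal{G}^r$), then computes its new state from its current state and the set of (sender, message) pairs received in round $r$. Leader election: eventually exactly one process irrevocably enters a special state ELECTED and every other process irrevocably enters the state NON-ELECTED (non-leaders need not know the leader's identifier). Causality: $p$ causally influences $q$ in round $t$ if $q=p$ or $(p\to q)\in\mathcal{G}^t$; a causal chain of length $k\ge1$ from $p$ in round $t$ to $q$ is a sequence $p=p_0,\dots,p_k=q$ with $p_i$ causally influencing $p_{i+1}$ in round $t+i$; $d_t(p,q)$ is the least such $k$ ($\infty$ if none). A root component of $\mathcal{G}^t$ is a strongly connected component $\mathcal{R}$ with no edge $(q\to p)$, $p\in\mathcal{R}$, $q\notin\mathcal{R}$. For an interval $I=[r,s]$, an $I$-vertex-stable root component is a set $\mathcal{R}\subseteq\Pi$ that is a root component of $\mathcal{G}^t$ for every $t\in I$. When each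 $\mathcal{G}^x$ has a unique root component $\mathcal{R}^x$, $D^x=\max\{d_x(p,q):p\in\mathcal{R}^x,q\in\Pi\}$ is the network causal diameter of round $x$, and for $I=[r,s]$, $D^I=\max\{D^x:x\in I,\ x+D^x-1\le s\}$ ($\infty$ if empty). An $I$-vertex-stable root component with $I=[r,s]$ is $D$-bounded if $D\ge D^I$ and $D^{s-D+1}\le D$. Assumption 1 (parameter $D$): every $\mathcal{G}^r$ has exactly one root component; every $I$-vertex-stable root component with $|I|\ge D$ is $D$-bounded; and there is an interval $J=[r_{ST},r_{ST}+d]$ with $d>4D$ such that there is a $D$-bounded $J$-vertex-stable root component. *)

theory Defs
  imports Main "HOL-Library.Extended_Nat"
begin

text \<open>Process identifiers are natural numbers; a set P of identifiers is the process set.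
  A communication pattern is G :: nat => (nat * nat) set, G r being the round-r graph
  (rounds are numbered from 1; G 0 is irrelevant).\<close>

datatype status = Undecided | Elected | NonElected

definition simple_graphs :: "nat set \<Rightarrow> (nat \<Rightarrow> (nat \<times> nat) set) \<Rightarrow> bool" where
  "simple_graphs P G \<longleftrightarrow> (\<forall>r. G r \<subseteq> P \<times> P \<and> (\<forall>p. (p, p) \<notin> G r))"

definition infl :: "(nat \<Rightarrow> (nat \<times> nat) set) \<Rightarrow> nat \<Rightarrow> nat \<Rightarrow> nat \<Rightarrow> bool" where
  "infl G t p q \<longleftrightarrow> q = p \<or> (p, q) \<in> G t"

definition causal_chain :: "(nat \<Rightarrow> (nat \<times> nat) set) \<Rightarrow> nat \<Rightarrow> nat \<Rightarrow> nat \<Rightarrow> nat \<Rightarrow> bool" where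
  "causal_chain G t k p q \<longleftrightarrow> k \<ge> 1 \<and>
     (\<exists>c :: nat \<Rightarrow> nat. c 0 = p \<and> c k = q \<and> (\<forall>i<k. infl G (t + i) (c i) (c (Suc i))))"

definition cdist :: "(nat \<Rightarrow> (nat \<times> nat) set) \<Rightarrow> nat \<Rightarrow> nat \<Rightarrow> nat \<Rightarrow> enat" where
  "cdist G t p q = (if \<exists>k. causal_chain G t k p q
                    then enat (LEAST k. causal_chain G t k p q) else \<infinity>)"

definition root_component :: "nat set \<Rightarrow> (nat \<Rightarrow> (nat \<times> nat) set) \<Rightarrow> nat \<Rightarrow> nat set \<Rightarrow> bool" where
  "root_component P G t R \<longleftrightarrow>
     R \<noteq> {} \<and> R \<subseteq> P \<and>
     (\<forall>p\<in>R. \<forall>q\<in>R. (p, q) \<in> (G t)\<^sup>*) \<and>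
     (\<forall>p\<in>R. \<forall>q\<in>P. (p, q) \<in> (G t)\<^sup>* \<and> (q, p) \<in> (G t)\<^sup>* \<longrightarrow> q \<in> R) \<and>
     (\<forall>p\<in>R. \<forall>q. (q, p) \<in> G t \<longrightarrow> q \<in> R)"

definition rootc :: "nat set \<Rightarrow> (nat \<Rightarrow> (nat \<times> nat) set) \<Rightarrow> nat \<Rightarrow> nat set" where
  "rootc P G t = (THE R. root_component P G t R)"

text \<open>network causal diameter D^x (meaningful when G x has a unique root component)\<close>
definition net_diam :: "nat set \<Rightarrow> (nat \<Rightarrow> (nat \<times> nat) set) \<Rightarrow> nat \<Rightarrow> enat" where
  "net_diam P G x = Sup {cdist G x p q | p q. p \<in> rootc P G x \<and> q \<in> P}"

text \<open>D^I for I = [r,s]; the condition x + D^x - 1 <= s is written x + D^x <= s + 1\<close>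
definition interval_diam :: "nat set \<Rightarrow> (nat \<Rightarrow> (nat \<times> nat) set) \<Rightarrow> nat \<Rightarrow> nat \<Rightarrow> enat" where
  "interval_diam P G r s =
     (let S = {net_diam P G x | x. r \<le> x \<and> x \<le> s \<and> enat x + net_diam P G x \<le> enat s + 1}
      in if S = {} then \<infinity> else Sup S)"

definition vstable :: "nat set \<Rightarrow> (nat \<Rightarrow> (nat \<times> nat) set) \<Rightarrow> nat \<Rightarrow> nat \<Rightarrow> nat set \<Rightarrow> bool" where
  "vstable P G r s R \<longleftrightarrow> (\<forall>t. r \<le> t \<and> t \<le> s \<longrightarrow> root_component P G t R)"

definition D_bounded :: "nat set \<Rightarrow> (nat \<Rightarrow> (nat \<times> nat) set) \<Rightarrow> nat \<Rightarrow> nat \<Rightarrow> nat \<Rightarrow> bool" where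
  "D_bounded P G D r s \<longleftrightarrow>
     interval_diam P G r s \<le> enat D \<and> net_diam P G (s + 1 - D) \<le> enat D"

definition assumption1 :: "nat set \<Rightarrow> (nat \<Rightarrow> (nat \<times> nat) set) \<Rightarrow> nat \<Rightarrow> bool" where
  "assumption1 P G D \<longleftrightarrow>
     (\<forall>r\<ge>1. \<exists>!R. root_component P G r R) \<and>
     (\<forall>r s R. 1 \<le> r \<and> r \<le> s \<and> s + 1 - r \<ge> D \<and> vstable P G r s R \<longrightarrow> D_bounded P G D r s) \<and>
     (\<exists>rST d R. 1 \<le> rST \<and> d > 4 * D \<and> vstable P G rST (rST + d) R \<and> D_bounded P G D rST (rST + d))"

text \<open>The algorithm is given by an initial
  state depending only on the own identifier, a message function of the current state and
  a transition function of the current state and the set of (sender, message) pairs received.\<close>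
primrec run :: "(nat \<Rightarrow> 's) \<Rightarrow> ('s \<Rightarrow> 'm) \<Rightarrow> ('s \<Rightarrow> (nat \<times> 'm) set \<Rightarrow> 's)
                 \<Rightarrow> (nat \<Rightarrow> (nat \<times> nat) set) \<Rightarrow> nat \<Rightarrow> nat \<Rightarrow> 's" where
  "run init msg step G 0 p = init p"
| "run init msg step G (Suc r) p =
     step (run init msg step G r p)
           {(q, msg (run init msg step G r q)) | q. (q, p) \<in> G (Suc r)}"

definition solves_LE :: "(nat \<Rightarrow> 's) \<Rightarrow> ('s \<Rightarrow> 'm) \<Rightarrow> ('s \<Rightarrow> (nat \<times> 'm) set \<Rightarrow> 's)
                 \<Rightarrow> ('s \<Rightarrow> status) \<Rightarrow> nat set \<Rightarrow> (nat \<Rightarrow> (nat \<times> nat) set) \<Rightarrow> bool" where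
  "solves_LE init msg step out P G \<longleftrightarrow>
     (\<forall>p\<in>P. \<forall>r r'. r \<le> r' \<and> out (run init msg step G r p) \<noteq> Undecided \<longrightarrow>
                    out (run init msg step G r' p) = out (run init msg step G r p)) \<and>
     (\<exists>r. \<exists>l\<in>P. out (run init msg step G r l) = Elected \<and>
               (\<forall>q\<in>P. q \<noteq> l \<longrightarrow> out (run init msg step G r q) = NonElected))"

end

theory Submission
  imports Defs
begin

text \<open>An indistinguishability argument. With two processes \<open>0, 1\<close> under a static star
  (\<open>D = 1\<close>) some \<open>e \<in> {0, 1}\<close> is elected by some round \<open>T\<close>. On a ring of \<open>L = 2T + 2\<close> fresh
  processes that becomes a star centred at \<open>2\<close> after round \<open>T\<close> (\<open>D = T + 1\<close>) some ring process
  \<open>l\<close> is elected. In the merged network the ring edges are kept only inside the shrinking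
  causal past of \<open>l\<close> and of \<open>2\<close> at round \<open>T\<close>, and \<open>0\<close> feeds all other processes. This past never
  covers the whole ring, so up to round \<open>T\<close> the network is rooted at \<open>0\<close>, and Assumption 1
  holds with \<open>D = T + 1\<close>. But \<open>e\<close> sees the two-process run and \<open>l\<close> sees the ring run, so both
  are elected.\<close>

lemma run_eq_if_past_agrees:
  assumes closed: "\<And>t p. p \<in> C (Suc t) \<Longrightarrow> p \<in> C t"
    and same_in: "\<And>t p x. p \<in> C (Suc t) \<Longrightarrow> (x, p) \<in> G (Suc t) \<longleftrightarrow> (x, p) \<in> G' (Suc t)"
    and in_past: "\<And>t p x. p \<in> C (Suc t) \<Longrightarrow> (x, p) \<in> G (Suc t) \<Longrightarrow> x \<in> C t"
  shows "p \<in> C t \<Longrightarrow> run init msg step G t p = run init msg step G' t p"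
proof (induction t arbitrary: p)
  case 0
  show ?case by simp
next
  case (Suc t)
  have "run init msg step G t q = run init msg step G' t q" if "(q, p) \<in> G (Suc t)" for q
    using Suc.IH in_past[OF Suc.prems that] .
  then have "{(q, msg (run init msg step G t q)) | q. (q, p) \<in> G (Suc t)} =
             {(q, msg (run init msg step G' t q)) | q. (q, p) \<in> G' (Suc t)}"
    using same_in[OF Suc.prems] by force
  then show ?case using Suc.IH[OF closed[OF Suc.prems]] by simp
qed

lemma root_component_source_iff:
  assumes "s \<in> P" and no_in: "\<And>x. (x, s) \<notin> E t" and reach: "\<And>y. y \<in> P \<Longrightarrow> (s, y) \<in> (E t)\<^sup>*"
  shows "root_component P E t R \<longleftrightarrow> R = {s}"
proof
  have to_s: "x = s" if "(x, s) \<in> (E t)\<^sup>*" for x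
    using that no_in by (auto elim: rtranclE)
  assume rc: "root_component P E t R"
  then obtain p where p: "p \<in> R" "p \<in> P" unfolding root_component_def by blast
  have "x \<in> R" if "(x, p) \<in> (E t)\<^sup>*" for x
    using that
  proof (induction rule: converse_rtrancl_induct)
    case base
    show ?case using p(1) .
  next
    case (step y z)
    then show ?case using rc unfolding root_component_def by blast
  qed
  then have "s \<in> R" using reach[OF p(2)] by blast
  moreover have "x = s" if "x \<in> R" for x
    using that rc \<open>s \<in> R\<close> to_s unfolding root_component_def by blast
  ultimately show "R = {s}" by blast
next
  assume "R = {s}"
  then show "root_component P E t R"
    using assms by (auto simp: root_component_def elim: rtranclE)
qed

definition star_edges :: "nat set \<Rightarrow> nat \<Rightarrow> (nat \<times> nat) set" where
  "star_edges P c = {(c, p) | p. p \<in> P \<and> p \<noteq> c}"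

lemma root_component_star_iff:
  assumes "G t = star_edges P c" "c \<in> P"
  shows "root_component P G t R \<longleftrightarrow> R = {c}"
  by (rule root_component_source_iff) (use assms in \<open>auto simp: star_edges_def\<close>)

lemma rootc_star:
  assumes "G t = star_edges P c" "c \<in> P"
  shows "rootc P G t = {c}"
  unfolding rootc_def using root_component_star_iff[of G t P c] assms by (intro the_equality) auto

lemma cdist_star:
  assumes "G t = star_edges P c" "p \<in> P"
  shows "cdist G t c p = 1"
proof -
  have chain: "causal_chain G t 1 c p"
    unfolding causal_chain_def infl_def
    using assms by (auto simp: star_edges_def intro!: exI[of _ "\<lambda>i. if i = 0 then c else p"])
  have "(LEAST k. causal_chain G t k c p) = 1"
    by (rule Least_equality) (use chain in \<open>auto simp: causal_chain_def\<close>)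
  then show ?thesis using chain by (auto simp: cdist_def one_enat_def)
qed

lemma net_diam_star:
  assumes "G t = star_edges P c" "c \<in> P"
  shows "net_diam P G t = 1"
proof -
  have "{cdist G t p q | p q. p \<in> rootc P G t \<and> q \<in> P} = (\<lambda>q. cdist G t c q) ` P"
    using rootc_star[of G t P c] assms by auto
  also have "\<dots> = {1}"
    using cdist_star[of G t P c] assms by force
  finally show ?thesis unfolding net_diam_def by simp
qed

lemma D_bounded_if_diam_one:
  assumes diam: "\<And>x. k \<le> x \<Longrightarrow> net_diam P G x = 1"
    and "1 \<le> k" "k \<le> r" "r \<le> s" "k \<le> s + 1 - r"
  shows "D_bounded P G k r s"
proof -
  let ?S = "{net_diam P G x | x. r \<le> x \<and> x \<le> s \<and> enat x + net_diam P G x \<le> enat s + 1}"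
  have "?S = {1}"
  proof
    show "?S \<subseteq> {1}" using diam assms by auto
    have "enat r + 1 \<le> enat s + 1" using assms by (simp add: one_enat_def)
    then show "{1} \<subseteq> ?S" using diam assms by force
  qed
  then have "interval_diam P G r s = 1" unfolding interval_diam_def Let_def by simp
  moreover have "net_diam P G (s + 1 - k) = 1" using diam assms by auto
  ultimately show ?thesis unfolding D_bounded_def using assms by (simp add: one_enat_def)
qed

text \<open>Before round \<open>k\<close> the root component is not \<open>{c}\<close>, so no vertex-stable root component
  reaches across round \<open>k\<close>; every stable interval of length at least \<open>k\<close> therefore lies in the
  star phase, where the causal diameter is \<open>1\<close>.\<close>

lemma assumption1_if_eventually_star:
  assumes "c \<in> P" "1 \<le> k"
    and star: "\<And>t. k \<le> t \<Longrightarrow> G t = star_edges P c"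
    and before: "\<And>t. 1 \<le> t \<Longrightarrow> t < k \<Longrightarrow> \<exists>R. R \<noteq> {c} \<and> (\<forall>R'. root_component P G t R' \<longleftrightarrow> R' = R)"
  shows "assumption1 P G k"
proof -
  have diam: "net_diam P G x = 1" if "k \<le> x" for x
    using net_diam_star[of G x P c] star that assms(1) by blast
  have star_root: "root_component P G t R \<longleftrightarrow> R = {c}" if "k \<le> t" for t R
    using root_component_star_iff[of G t P c] star that assms(1) by blast
  have unique: "\<exists>!R. root_component P G t R" if "1 \<le> t" for t
  proof (cases "k \<le> t")
    case True
    then show ?thesis using star_root by auto
  next
    case False
    then show ?thesis using before[OF that] by fastforce
  qed
  have stable: "D_bounded P G k r s"
    if "1 \<le> r" "r \<le> s" "k \<le> s + 1 - r" "vstable P G r s R" for r s R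
  proof -
    have "k \<le> r"
    proof (rule ccontr)
      assume "\<not> k \<le> r"
      then have "R = {c}" using that star_root[of s R] unfolding vstable_def by auto
      moreover have "root_component P G r R" using that unfolding vstable_def by auto
      ultimately show False using before[of r] that \<open>\<not> k \<le> r\<close> by auto
    qed
    then show ?thesis using D_bounded_if_diam_one[OF diam] that assms(2) by blast
  qed
  have "vstable P G k (k + (4 * k + 1)) {c}" unfolding vstable_def using star_root by auto
  moreover have "D_bounded P G k k (k + (4 * k + 1))"
    using D_bounded_if_diam_one[OF diam] assms(2) by auto
  ultimately show ?thesis
    unfolding assumption1_def using unique stable assms(2) by (metis less_add_one)
qed

definition ring :: "nat \<Rightarrow> nat set" where
  "ring L = {2..<L + 2}"

text \<open>Ring edges run \<open>2 \<rightarrow> 3 \<rightarrow> \<dots> \<rightarrow> L + 1 \<rightarrow> 2\<close>; \<open>ring_dist L p j\<close> is the number of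
  edges from \<open>p\<close> to \<open>j\<close>.\<close>

definition ring_pred :: "nat \<Rightarrow> nat \<Rightarrow> nat" where
  "ring_pred L p = (if p = 2 then L + 1 else p - 1)"

definition ring_edges :: "nat \<Rightarrow> nat set \<Rightarrow> (nat \<times> nat) set" where
  "ring_edges L S = {(ring_pred L p, p) | p. p \<in> S}"

definition ring_dist :: "nat \<Rightarrow> nat \<Rightarrow> nat \<Rightarrow> nat" where
  "ring_dist L p j = (if p \<le> j then j - p else j + L - p)"

lemma ring_ge_2: "p \<in> ring L \<Longrightarrow> 2 \<le> p"
  by (simp add: ring_def)

lemma ring_pred_in_ring: "p \<in> ring L \<Longrightarrow> ring_pred L p \<in> ring L"
  by (auto simp: ring_def ring_pred_def)

lemma ring_pred_neq: "p \<in> ring L \<Longrightarrow> 2 \<le> L \<Longrightarrow> ring_pred L p \<noteq> p"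
  by (auto simp: ring_def ring_pred_def)

lemma ring_dist_eq_0_iff: "p \<in> ring L \<Longrightarrow> j \<in> ring L \<Longrightarrow> ring_dist L p j = 0 \<longleftrightarrow> p = j"
  by (auto simp: ring_def ring_dist_def)

lemma ring_dist_pred_target:
  "y \<in> ring L \<Longrightarrow> f \<in> ring L \<Longrightarrow> y \<noteq> f \<Longrightarrow> ring_dist L f (ring_pred L y) = ring_dist L f y - 1"
  by (auto simp: ring_def ring_dist_def ring_pred_def)

lemma ring_dist_pred_source:
  "p \<in> ring L \<Longrightarrow> j \<in> ring L \<Longrightarrow> ring_dist L p j + 1 < L \<Longrightarrow>
    ring_dist L (ring_pred L p) j = ring_dist L p j + 1"
  by (auto simp: ring_def ring_dist_def ring_pred_def)

lemma card_ring_ball: "j \<in> ring L \<Longrightarrow> card {p \<in> ring L. ring_dist L p j \<le> m} \<le> Suc m"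
proof -
  assume "j \<in> ring L"
  then have "inj_on (\<lambda>p. ring_dist L p j) (ring L)"
    by (auto simp: ring_def ring_dist_def inj_on_def split: if_splits)
  then have "card {p \<in> ring L. ring_dist L p j \<le> m} \<le> card {..m}"
    by (intro card_inj_on_le[where f="\<lambda>p. ring_dist L p j"]) (auto simp: inj_on_def)
  then show ?thesis by simp
qed

lemma ring_reachable:
  assumes "f \<in> ring L" "(a, f) \<in> E\<^sup>*"
    and pred_edge: "\<And>y. y \<in> ring L \<Longrightarrow> y \<noteq> f \<Longrightarrow> (ring_pred L y, y) \<in> E \<or> (a, y) \<in> E\<^sup>*"
    and "y \<in> ring L"
  shows "(a, y) \<in> E\<^sup>*"
proof -
  have "\<forall>y \<in> ring L. ring_dist L f y = m \<longrightarrow> (a, y) \<in> E\<^sup>*" for m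
  proof (induction m)
    case 0
    then show ?case using ring_dist_eq_0_iff[of f L] assms(1,2) by blast
  next
    case (Suc m)
    show ?case
    proof (intro ballI impI)
      fix y assume y: "y \<in> ring L" and dist: "ring_dist L f y = Suc m"
      then have "y \<noteq> f" using ring_dist_eq_0_iff[of f L y] assms(1) by auto
      moreover have "(a, ring_pred L y) \<in> E\<^sup>*"
        using Suc.IH ring_pred_in_ring[OF y] ring_dist_pred_target[OF y assms(1) \<open>y \<noteq> f\<close>] dist
        by simp
      ultimately show "(a, y) \<in> E\<^sup>*"
        using pred_edge[OF y] by (meson rtrancl_into_rtrancl)
    qed
  qed
  then show ?thesis using assms(4) by blast
qed

lemma root_component_ring_iff:
  assumes "E t = ring_edges L (ring L)" "2 \<le> L"
  shows "root_component (ring L) E t R \<longleftrightarrow> R = ring L"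
proof -
  have strong: "(x, y) \<in> (E t)\<^sup>*" if "x \<in> ring L" "y \<in> ring L" for x y
    by (rule ring_reachable[of x]) (use that assms in \<open>auto simp: ring_edges_def\<close>)
  show ?thesis
  proof
    assume rc: "root_component (ring L) E t R"
    then obtain p where "p \<in> R" "R \<subseteq> ring L" unfolding root_component_def by blast
    then show "R = ring L" using rc strong unfolding root_component_def by blast
  next
    have "2 \<in> ring L" using assms(2) by (simp add: ring_def)
    moreover have "E t \<subseteq> ring L \<times> ring L"
      using assms ring_pred_in_ring by (auto simp: ring_edges_def)
    moreover assume "R = ring L"
    ultimately show "root_component (ring L) E t R"
      using strong unfolding root_component_def by blast
  qed
qed

definition admissible :: "nat set \<Rightarrow> (nat \<Rightarrow> (nat \<times> nat) set) \<Rightarrow> nat \<Rightarrow> bool" where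
  "admissible P G D \<longleftrightarrow> finite P \<and> card P \<ge> 2 \<and> simple_graphs P G \<and> D \<ge> 1 \<and> assumption1 P G D"

definition pair_graphs :: "nat \<Rightarrow> (nat \<times> nat) set" where
  "pair_graphs t = star_edges {0, 1} 0"

definition ring_graphs :: "nat \<Rightarrow> nat \<Rightarrow> nat \<Rightarrow> (nat \<times> nat) set" where
  "ring_graphs L T t = (if t \<le> T then ring_edges L (ring L) else star_edges (ring L) 2)"

lemma ring_edges_simple:
  assumes "S \<subseteq> ring L" "2 \<le> L"
  shows "ring_edges L S \<subseteq> ring L \<times> ring L" "(p, p) \<notin> ring_edges L S"
  using assms ring_pred_in_ring ring_pred_neq[of _ L, symmetric] by (auto simp: ring_edges_def)

lemma admissible_pair: "admissible {0, 1} pair_graphs 1"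
proof -
  have "assumption1 {0, 1} pair_graphs 1"
    by (rule assumption1_if_eventually_star[of 0]) (auto simp: pair_graphs_def)
  then show ?thesis
    by (auto simp: admissible_def simple_graphs_def pair_graphs_def star_edges_def)
qed

lemma admissible_ring:
  assumes "2 \<le> L"
  shows "admissible (ring L) (ring_graphs L T) (T + 1)"
proof -
  have "2 \<in> ring L" "3 \<in> ring L" using assms by (auto simp: ring_def)
  have "root_component (ring L) (ring_graphs L T) t R \<longleftrightarrow> R = ring L" if "t \<le> T" for t R
    using root_component_ring_iff[of "ring_graphs L T" t L] that assms by (simp add: ring_graphs_def)
  moreover have "ring L \<noteq> {2}" using \<open>3 \<in> ring L\<close> by auto
  ultimately have "assumption1 (ring L) (ring_graphs L T) (T + 1)"
    using \<open>2 \<in> ring L\<close>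
    by (intro assumption1_if_eventually_star[of 2]) (auto simp: ring_graphs_def)
  moreover have "simple_graphs (ring L) (ring_graphs L T)"
    using \<open>2 \<in> ring L\<close> ring_edges_simple[of "ring L" L] assms
    by (auto simp: simple_graphs_def ring_graphs_def star_edges_def)
  moreover have "card (ring L) = L" by (simp add: ring_def)
  ultimately show ?thesis using assms by (simp add: admissible_def ring_def)
qed

text \<open>\<open>front L T l t\<close> is the set of ring processes whose state after round \<open>t\<close> can still
  reach \<open>l\<close> or the star centre \<open>2\<close> along ring edges by round \<open>T\<close>.\<close>

definition front :: "nat \<Rightarrow> nat \<Rightarrow> nat \<Rightarrow> nat \<Rightarrow> nat set" where
  "front L T l t = {p \<in> ring L. ring_dist L p l \<le> T - t \<or> ring_dist L p 2 \<le> T - t}"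

definition merged_procs :: "nat \<Rightarrow> nat set" where
  "merged_procs L = insert 0 (insert 1 (ring L))"

definition merged_graphs :: "nat \<Rightarrow> nat \<Rightarrow> nat \<Rightarrow> nat \<Rightarrow> (nat \<times> nat) set" where
  "merged_graphs L T l t =
    (if t \<le> T then ring_edges L (front L T l t) \<union> {0} \<times> insert 1 (ring L - front L T l t)
     else star_edges (merged_procs L) 2)"

lemma front_subset_ring: "front L T l t \<subseteq> ring L"
  by (auto simp: front_def)

lemma front_misses_ring:
  assumes "l \<in> ring L" "2 * T < L" "1 \<le> t" "t \<le> T"
  shows "\<exists>f \<in> ring L. f \<notin> front L T l t"
proof (rule ccontr)
  assume "\<not> ?thesis"
  then have "ring L \<subseteq> front L T l t" by blast
  then have "card (ring L) \<le> card (front L T l t)"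
    by (intro card_mono) (auto simp: front_def ring_def)
  then have "L \<le> card (front L T l t)" by (simp add: ring_def)
  also have "\<dots> \<le> card ({p \<in> ring L. ring_dist L p l \<le> T - t} \<union> {p \<in> ring L. ring_dist L p 2 \<le> T - t})"
    by (intro card_mono) (auto simp: ring_def front_def)
  also have "\<dots> \<le> Suc (T - t) + Suc (T - t)"
    using card_Un_le card_ring_ball[of l L "T - t"] card_ring_ball[of 2 L "T - t"] assms(1,2)
    by (force simp: ring_def intro: le_trans add_mono)
  finally show False using assms by linarith
qed

text \<open>The front has at most \<open>2 (T - t + 1) \<le> 2 T < L\<close> elements, so some ring vertex lies
  outside it; that vertex is fed by \<open>0\<close>, and from it the ring edges reach the rest of the ring.\<close>

lemma root_component_merged_iff:
  assumes "l \<in> ring L" "2 * T < L" "1 \<le> t" "t \<le> T"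
  shows "root_component (merged_procs L) (merged_graphs L T l) t R \<longleftrightarrow> R = {0}"
proof (rule root_component_source_iff)
  let ?E = "merged_graphs L T l t"
  have E: "?E = ring_edges L (front L T l t) \<union> {0} \<times> insert 1 (ring L - front L T l t)"
    using assms(4) by (simp add: merged_graphs_def)
  show "0 \<in> merged_procs L" by (simp add: merged_procs_def)
  show "(x, 0) \<notin> ?E" for x
    unfolding E ring_edges_def front_def ring_def by auto
  obtain f where f: "f \<in> ring L" "f \<notin> front L T l t"
    using front_misses_ring[OF assms] by blast
  show "(0, y) \<in> ?E\<^sup>*" if y: "y \<in> merged_procs L" for y
  proof -
    consider "y = 0" | "y = 1" | "y \<in> ring L" using y by (auto simp: merged_procs_def)
    then show ?thesis
    proof cases
      case 1
      then show ?thesis by simp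
    next
      case 2
      then have "(0, y) \<in> ?E" unfolding E by blast
      then show ?thesis by (rule r_into_rtrancl)
    next
      case 3
      show ?thesis
      proof (rule ring_reachable[OF f(1) _ _ 3])
        show "(0, f) \<in> ?E\<^sup>*" using f unfolding E by blast
        show "(ring_pred L y', y') \<in> ?E \<or> (0, y') \<in> ?E\<^sup>*" if "y' \<in> ring L" for y'
          using that unfolding E ring_edges_def by blast
      qed
    qed
  qed
qed

lemma admissible_merged:
  assumes "l \<in> ring L" "2 * T < L" "2 \<le> L"
  shows "admissible (merged_procs L) (merged_graphs L T l) (T + 1)"
proof -
  have "2 \<in> ring L" using assms by (simp add: ring_def)
  then have "assumption1 (merged_procs L) (merged_graphs L T l) (T + 1)"
    using root_component_merged_iff[OF assms(1,2)]
    by (intro assumption1_if_eventually_star[of 2])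
      (auto simp: merged_procs_def merged_graphs_def intro!: exI[of _ "{0}"])
  moreover have "simple_graphs (merged_procs L) (merged_graphs L T l)"
    unfolding simple_graphs_def
  proof
    fix r
    have "ring_edges L (front L T l r) \<subseteq> ring L \<times> ring L" "(p, p) \<notin> ring_edges L (front L T l r)" for p
      using ring_edges_simple[OF front_subset_ring assms(3)] by auto
    moreover have "0 \<notin> ring L" "1 \<notin> ring L" by (auto simp: ring_def)
    ultimately show "merged_graphs L T l r \<subseteq> merged_procs L \<times> merged_procs L \<and>
        (\<forall>p. (p, p) \<notin> merged_graphs L T l r)"
      using \<open>2 \<in> ring L\<close>
      by (auto simp: merged_graphs_def merged_procs_def star_edges_def dest: ring_ge_2)
  qed
  moreover have "card (ring L) \<le> card (merged_procs L)"
    by (intro card_mono) (auto simp: merged_procs_def ring_def)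
  ultimately show ?thesis using assms by (simp add: admissible_def merged_procs_def ring_def)
qed

lemma front_Suc_subset: "front L T l (Suc t) \<subseteq> front L T l t"
  by (auto simp: front_def)

lemma front_at_end: "l \<in> ring L \<Longrightarrow> 2 \<in> ring L \<Longrightarrow> front L T l T = {l, 2}"
  by (auto simp: front_def ring_dist_def ring_def)

lemma ring_pred_in_front:
  assumes "p \<in> front L T l (Suc t)" "Suc t \<le> T" "T < L" "l \<in> ring L" "2 \<in> ring L"
  shows "ring_pred L p \<in> front L T l t"
proof -
  have p: "p \<in> ring L" using assms(1) by (simp add: front_def)
  have "ring_dist L p j \<le> T - Suc t \<Longrightarrow> ring_dist L (ring_pred L p) j \<le> T - t" if "j \<in> ring L" for j
    using ring_dist_pred_source[OF p that] assms(2,3) by simp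
  then show ?thesis
    using assms ring_pred_in_ring[OF p] by (auto simp: front_def)
qed

lemma run_merged_eq_pair:
  assumes "p \<in> {0, 1}" "t \<le> T"
  shows "run init msg step pair_graphs t p = run init msg step (merged_graphs L T l) t p"
proof (rule run_eq_if_past_agrees[where C="\<lambda>t. if t \<le> T then {0, 1} else {}"])
  have "0 \<notin> ring L" "1 \<notin> ring L" by (auto simp: ring_def)
  then show "(x, p) \<in> pair_graphs (Suc t) \<longleftrightarrow> (x, p) \<in> merged_graphs L T l (Suc t)"
    if "p \<in> (if Suc t \<le> T then {0, 1} else {})" for t p x
    using that
    by (auto dest: front_subset_ring[THEN subsetD]
        simp: pair_graphs_def merged_graphs_def star_edges_def ring_edges_def split: if_splits)
qed (use assms in \<open>auto simp: pair_graphs_def star_edges_def split: if_splits\<close>)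

text \<open>The leader \<open>l\<close> of the ring cannot tell the merged network from the ring: its causal past
  up to round \<open>T\<close> lies in the front, which carries the ring edges, and afterwards its only
  in-neighbour is the star centre \<open>2\<close>, which is also in the front.\<close>

lemma run_merged_eq_ring:
  assumes "l \<in> ring L" "2 * T < L"
  shows "run init msg step (ring_graphs L T) t l = run init msg step (merged_graphs L T l) t l"
proof (rule run_eq_if_past_agrees[where C="\<lambda>t. if t \<le> T then front L T l t else {l, 2}"])
  have "2 \<in> ring L" "T < L" using assms by (auto simp: ring_def)
  have front_end: "front L T l T = {l, 2}" using front_at_end[OF assms(1) \<open>2 \<in> ring L\<close>] .
  show "p \<in> (if t \<le> T then front L T l t else {l, 2})"
    if "p \<in> (if Suc t \<le> T then front L T l (Suc t) else {l, 2})" for t p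
  proof (cases "Suc t \<le> T")
    case True
    then show ?thesis using that front_Suc_subset[of L T l t] by auto
  next
    case False
    then show ?thesis using that front_end by (auto simp: not_less_eq_eq)
  qed
  show "(x, p) \<in> ring_graphs L T (Suc t) \<longleftrightarrow> (x, p) \<in> merged_graphs L T l (Suc t)"
    if "p \<in> (if Suc t \<le> T then front L T l (Suc t) else {l, 2})" for t p x
    using that assms(1) \<open>2 \<in> ring L\<close>
    by (auto dest: front_subset_ring[THEN subsetD] ring_ge_2
        simp: front_def ring_graphs_def merged_graphs_def ring_edges_def star_edges_def merged_procs_def
        split: if_splits)
  show "x \<in> (if t \<le> T then front L T l t else {l, 2})"
    if "p \<in> (if Suc t \<le> T then front L T l (Suc t) else {l, 2})" "(x, p) \<in> ring_graphs L T (Suc t)"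
    for t p x
    using that ring_pred_in_front[OF _ _ \<open>T < L\<close> assms(1) \<open>2 \<in> ring L\<close>] front_end
    by (auto simp: ring_graphs_def ring_edges_def star_edges_def not_less_eq_eq split: if_splits)
qed (use assms in \<open>auto simp: front_def ring_dist_def\<close>)

lemma solves_LE_unique_elected:
  assumes solves: "solves_LE init msg step out P G"
    and "p \<in> P" "q \<in> P"
    and "out (run init msg step G r p) = Elected" "out (run init msg step G r' q) = Elected"
  shows "p = q"
proof -
  obtain r0 l where others: "\<And>x. x \<in> P \<Longrightarrow> x \<noteq> l \<Longrightarrow> out (run init msg step G r0 x) = NonElected"
    using solves unfolding solves_LE_def by blast
  have irrevocable: "out (run init msg step G s' x) = out (run init msg step G s x)"
    if "x \<in> P" "s \<le> s'" "out (run init msg step G s x) \<noteq> Undecided" for x s s'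
    using solves that unfolding solves_LE_def by blast
  have "x = l" if "x \<in> P" "out (run init msg step G s x) = Elected" for x s
  proof (rule ccontr)
    assume "x \<noteq> l"
    then have "out (run init msg step G (max s r0) x) = NonElected"
      using irrevocable[of x r0 "max s r0"] others that(1) by simp
    moreover have "out (run init msg step G (max s r0) x) = Elected"
      using irrevocable[of x s "max s r0"] that by simp
    ultimately show False by simp
  qed
  then show ?thesis using assms by metis
qed

theorem theorem4:
  fixes init :: "nat \<Rightarrow> 's" and msg :: "'s \<Rightarrow> 'm"
    and step :: "'s \<Rightarrow> (nat \<times> 'm) set \<Rightarrow> 's" and out :: "'s \<Rightarrow> status"
  shows "\<not> (\<forall>(P :: nat set) G (D :: nat).
              finite P \<and> card P \<ge> 2 \<and> simple_graphs P G \<and> D \<ge> 1 \<and> assumption1 P G D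
              \<longrightarrow> solves_LE init msg step out P G)"
proof
  assume "\<forall>(P :: nat set) G (D :: nat).
              finite P \<and> card P \<ge> 2 \<and> simple_graphs P G \<and> D \<ge> 1 \<and> assumption1 P G D
              \<longrightarrow> solves_LE init msg step out P G"
  then have solves: "solves_LE init msg step out P G" if "admissible P G D" for P G D
    using that unfolding admissible_def by blast
  obtain T e where e: "e \<in> {0, 1}" "out (run init msg step pair_graphs T e) = Elected"
    using solves[OF admissible_pair] unfolding solves_LE_def by blast
  define L where "L = 2 * T + 2"
  have L: "2 \<le> L" "2 * T < L" unfolding L_def by simp_all
  obtain r l where l: "l \<in> ring L" "out (run init msg step (ring_graphs L T) r l) = Elected"
    using solves[OF admissible_ring[OF L(1)]] unfolding solves_LE_def by blast
  have "e = l"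
  proof (rule solves_LE_unique_elected[OF solves[OF admissible_merged[OF l(1) L(2,1)]]])
    show "e \<in> merged_procs L" "l \<in> merged_procs L"
      using e(1) l(1) by (auto simp: merged_procs_def)
    show "out (run init msg step (merged_graphs L T l) T e) = Elected"
      using run_merged_eq_pair[of e T T init msg step L l] e by simp
    show "out (run init msg step (merged_graphs L T l) r l) = Elected"
      using run_merged_eq_ring[OF l(1) L(2), of init msg step r] l by simp
  qed
  then show False using e(1) l(1) ring_ge_2 by force
qed

end
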